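(* If $G$ is a finite, connected, weakly-cliqued graph with $\chi(G)\ge 3$, then $G$ is trivially power-colorable.
   Context: Graphs are simple and undirected; a $k$-coloring is a proper coloring with colors in $\{0,\dots,k-1\}$. A graph $G$ with $\chi(G)=k$ is weakly-cliqued if every vertex lies in a clique of size $k$. For graphs $(G_i)_{i\in I}$, the product $\times_{i\in I}G_i$ has vertex set $\times_{i\in I}V(G_i)$, with $(u_i)$ adjacent to $(v_i)$ iff $u_iv_i\in E(G_i)$ for all $i$; $G^n$ is the product of $n$ copies of $G$. A coloring $\Phi$ of $\times_{i\in I}G_i$ is trivial if there exist $i^*\in I$ and a proper coloring $\phi$ of $G_{i^*}$ with $\Phi(v)=\phi(v_{i^*})$ for all $v$. A graph $H$ is trivially power-colorable if for every positive integer $n$, every $\chi(H)$-coloring of $H^n$ (viewed as the product of $n$ copies of $H$) is trivial. *)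

theory Defs
  imports "HOL-Library.FuncSet"
begin

definition graph :: "'a set \<Rightarrow> ('a \<Rightarrow> 'a \<Rightarrow> bool) \<Rightarrow> bool" where
  "graph V E \<longleftrightarrow> (\<forall>u v. E u v \<longrightarrow> u \<in> V \<and> v \<in> V \<and> E v u \<and> u \<noteq> v)"

definition proper_coloring :: "'a set \<Rightarrow> ('a \<Rightarrow> 'a \<Rightarrow> bool) \<Rightarrow> ('a \<Rightarrow> nat) \<Rightarrow> bool" where
  "proper_coloring V E c \<longleftrightarrow> (\<forall>u\<in>V. \<forall>v\<in>V. E u v \<longrightarrow> c u \<noteq> c v)"

definition k_coloring :: "'a set \<Rightarrow> ('a \<Rightarrow> 'a \<Rightarrow> bool) \<Rightarrow> nat \<Rightarrow> ('a \<Rightarrow> nat) \<Rightarrow> bool" where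
  "k_coloring V E k c \<longleftrightarrow> proper_coloring V E c \<and> (\<forall>v\<in>V. c v < k)"

definition chromatic_number :: "'a set \<Rightarrow> ('a \<Rightarrow> 'a \<Rightarrow> bool) \<Rightarrow> nat" where
  "chromatic_number V E = (LEAST k. \<exists>c. k_coloring V E k c)"

definition is_clique :: "'a set \<Rightarrow> ('a \<Rightarrow> 'a \<Rightarrow> bool) \<Rightarrow> 'a set \<Rightarrow> bool" where
  "is_clique V E K \<longleftrightarrow> K \<subseteq> V \<and> (\<forall>u\<in>K. \<forall>v\<in>K. u \<noteq> v \<longrightarrow> E u v)"

definition weakly_cliqued :: "'a set \<Rightarrow> ('a \<Rightarrow> 'a \<Rightarrow> bool) \<Rightarrow> bool" where
  "weakly_cliqued V E \<longleftrightarrow>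
     (\<forall>v\<in>V. \<exists>K. is_clique V E K \<and> v \<in> K \<and> finite K \<and> card K = chromatic_number V E)"

definition connected_graph :: "'a set \<Rightarrow> ('a \<Rightarrow> 'a \<Rightarrow> bool) \<Rightarrow> bool" where
  "connected_graph V E \<longleftrightarrow> V \<noteq> {} \<and> (\<forall>u\<in>V. \<forall>v\<in>V. E\<^sup>*\<^sup>* u v)"

definition power_verts :: "'a set \<Rightarrow> nat \<Rightarrow> (nat \<Rightarrow> 'a) set" where
  "power_verts V n = ({0..<n} \<rightarrow>\<^sub>E V)"

definition power_edges :: "('a \<Rightarrow> 'a \<Rightarrow> bool) \<Rightarrow> nat \<Rightarrow> (nat \<Rightarrow> 'a) \<Rightarrow> (nat \<Rightarrow> 'a) \<Rightarrow> bool" where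
  "power_edges E n x y \<longleftrightarrow> (\<forall>i<n. E (x i) (y i))"

definition trivial_power_coloring ::
  "'a set \<Rightarrow> ('a \<Rightarrow> 'a \<Rightarrow> bool) \<Rightarrow> nat \<Rightarrow> ((nat \<Rightarrow> 'a) \<Rightarrow> nat) \<Rightarrow> bool" where
  "trivial_power_coloring V E n \<Phi> \<longleftrightarrow>
     (\<exists>i<n. \<exists>\<phi>. proper_coloring V E \<phi> \<and> (\<forall>x\<in>power_verts V n. \<Phi> x = \<phi> (x i)))"

definition trivially_power_colorable :: "'a set \<Rightarrow> ('a \<Rightarrow> 'a \<Rightarrow> bool) \<Rightarrow> bool" where
  "trivially_power_colorable V E \<longleftrightarrow>
     (\<forall>n\<ge>1. \<forall>\<Phi>. k_coloring (power_verts V n) (power_edges E n) (chromatic_number V E) \<Phi>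
                 \<longrightarrow> trivial_power_coloring V E n \<Phi>)"

end

theory Submission
  imports Defs "HOL-Combinatorics.Transposition"
begin

text \<open>Write \<open>H\<^sup>n\<^sup>+\<^sup>1\<close> as \<open>H\<^sup>n \<times> H\<close>. Both factors are connected and have every vertex on a
  \<open>k\<close>-clique: \<open>H\<^sup>n\<close> inherits cliques coordinatewise, and it is connected because the triangles
  of \<open>H\<close> give closed walks of every length \<open>\<ge> 2\<close>, so coordinate walks can be synchronized.
  A \<open>k\<close>-coloring of such a product depends on one factor only: restricted to a product of two
  \<open>k\<close>-cliques it is constant along all rows or all columns, and connectivity propagates this
  from clique to clique. Induction on \<open>n\<close> finishes the proof; the case \<open>n = 0\<close> is vacuous
  since \<open>H\<^sup>0\<close> is a single looped vertex.\<close>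

section \<open>Proper colorings of \<open>K\<^sub>k \<times> K\<^sub>k\<close>\<close>

lemma inj_on_lessThan_hits:
  assumes "inj_on f {..<k}" "\<And>t. t < k \<Longrightarrow> f t < (k::nat)" "\<alpha> < k"
  shows "\<exists>t<k. f t = \<alpha>"
proof -
  have "f ` {..<k} = {..<k}"
    using assms(1,2) by (intro endo_inj_surj) auto
  then show ?thesis
    using assms(3) by (metis imageE lessThan_iff)
qed

lemma inj_on_lessThan_off_diagonal_eq:
  assumes "inj_on f {..<k}" "\<And>t. t < k \<Longrightarrow> f t < (k::nat)" "\<And>t. t < k \<Longrightarrow> g t < k"
    and "\<And>s t. s < k \<Longrightarrow> t < k \<Longrightarrow> s \<noteq> t \<Longrightarrow> f s \<noteq> g t"
    and "s < k"
  shows "g s = f s"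
proof -
  obtain t where "t < k" "f t = g s"
    using inj_on_lessThan_hits[OF assms(1,2)] assms(3,5) by blast
  with assms(4,5) show ?thesis
    by metis
qed

lemma square_coloring_repeated_color_private:
  fixes d :: "nat \<Rightarrow> nat \<Rightarrow> nat"
  assumes proper: "\<And>s s' t t'. s < k \<Longrightarrow> s' < k \<Longrightarrow> t < k \<Longrightarrow> t' < k \<Longrightarrow>
      s \<noteq> s' \<Longrightarrow> t \<noteq> t' \<Longrightarrow> d s t \<noteq> d s' t'"
    and "s < k" "s' < k" "s' \<noteq> s" "t < k"
    and "t1 < k" "t2 < k" "t1 \<noteq> t2" "d s t1 = d s t2"
  shows "d s' t \<noteq> d s t1"
proof (cases "t = t1")
  case True
  then show ?thesis
    using proper[of s s' t2 t] assms(2-) by auto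
next
  case False
  then show ?thesis
    using proper[of s s' t1 t] assms(2-) by auto
qed

text \<open>A color repeated in one row occurs in no other row, so each row owns a private color;
  if moreover every row repeats a color, these \<open>k\<close> private colors exhaust all colors and
  leave each row a single one. Every row does repeat a color, since an injective row would
  contain all \<open>k\<close> colors, among them the private color of \<open>s0\<close>.\<close>
lemma square_coloring_rows_constant_if_not_inj:
  fixes d :: "nat \<Rightarrow> nat \<Rightarrow> nat"
  assumes range: "\<And>s t. s < k \<Longrightarrow> t < k \<Longrightarrow> d s t < k"
    and proper: "\<And>s s' t t'. s < k \<Longrightarrow> s' < k \<Longrightarrow> t < k \<Longrightarrow> t' < k \<Longrightarrow>
      s \<noteq> s' \<Longrightarrow> t \<noteq> t' \<Longrightarrow> d s t \<noteq> d s' t'"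
    and "s0 < k" "\<not> inj_on (d s0) {..<k}"
  shows "\<forall>s<k. \<forall>t<k. d s t = d s 0"
proof -
  note repeated_private = square_coloring_repeated_color_private[where d = d and k = k, OF proper]
  obtain t1 t2 where s0: "t1 < k" "t2 < k" "t1 \<noteq> t2" "d s0 t1 = d s0 t2"
    using assms(4) unfolding inj_on_def by blast
  have "\<exists>t1 t2. t1 < k \<and> t2 < k \<and> t1 \<noteq> t2 \<and> d s t1 = d s t2" if s: "s < k" for s
  proof (rule ccontr)
    assume "\<nexists>t1 t2. t1 < k \<and> t2 < k \<and> t1 \<noteq> t2 \<and> d s t1 = d s t2"
    then have inj: "inj_on (d s) {..<k}"
      unfolding inj_on_def by blast
    then have "s \<noteq> s0"
      using assms(4) by blast
    obtain t where "t < k" "d s t = d s0 t1"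
      using inj_on_lessThan_hits[OF inj] range s s0 \<open>s0 < k\<close> by blast
    then show False
      using repeated_private[of s0 s] \<open>s \<noteq> s0\<close> \<open>s0 < k\<close> s0 s by blast
  qed
  then obtain \<tau>1 \<tau>2 where \<tau>: "\<And>s. s < k \<Longrightarrow>
      \<tau>1 s < k \<and> \<tau>2 s < k \<and> \<tau>1 s \<noteq> \<tau>2 s \<and> d s (\<tau>1 s) = d s (\<tau>2 s)"
    by metis
  define \<alpha> where "\<alpha> s = d s (\<tau>1 s)" for s
  have private_color: "d s' t \<noteq> \<alpha> s" if "s < k" "s' < k" "s' \<noteq> s" "t < k" for s s' t
    unfolding \<alpha>_def using repeated_private \<tau> that by blast
  have "inj_on \<alpha> {..<k}"
    by (rule inj_onI) (metis \<alpha>_def \<tau> lessThan_iff private_color)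
  moreover have "\<alpha> s < k" if "s < k" for s
    unfolding \<alpha>_def using \<tau> range that by blast
  ultimately have "d s t = \<alpha> s" if "s < k" "t < k" for s t
    using inj_on_lessThan_hits[of \<alpha> k "d s t"] range private_color that by metis
  then show ?thesis
    by simp
qed

lemma square_coloring_rows_or_columns_constant:
  fixes d :: "nat \<Rightarrow> nat \<Rightarrow> nat"
  assumes range: "\<And>s t. s < k \<Longrightarrow> t < k \<Longrightarrow> d s t < k"
    and proper: "\<And>s s' t t'. s < k \<Longrightarrow> s' < k \<Longrightarrow> t < k \<Longrightarrow> t' < k \<Longrightarrow>
      s \<noteq> s' \<Longrightarrow> t \<noteq> t' \<Longrightarrow> d s t \<noteq> d s' t'"
  shows "(\<forall>s<k. \<forall>t<k. d s t = d s 0) \<or> (\<forall>s<k. \<forall>t<k. d s t = d 0 t)"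
proof (cases "\<forall>s<k. inj_on (d s) {..<k}")
  case True
  have "d s t = d 0 t" if "s < k" "t < k" for s t
  proof (cases "s = 0")
    case False
    then show ?thesis
      using inj_on_lessThan_off_diagonal_eq[of "d 0" k "d s" t] True range proper that by auto
  qed simp
  then show ?thesis
    by blast
next
  case False
  then show ?thesis
    using square_coloring_rows_constant_if_not_inj[where d = d and k = k, OF range proper] by blast
qed

section \<open>Colorings of products of cliqued connected graphs\<close>

definition clique_map :: "'a set \<Rightarrow> ('a \<Rightarrow> 'a \<Rightarrow> bool) \<Rightarrow> nat \<Rightarrow> (nat \<Rightarrow> 'a) \<Rightarrow> bool" where
  "clique_map V E k p \<longleftrightarrow> (\<forall>s<k. p s \<in> V) \<and> (\<forall>s<k. \<forall>t<k. s \<noteq> t \<longrightarrow> E (p s) (p t))"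

text \<open>Unlike \<^const>\<open>connected_graph\<close>, walks are confined to \<open>V\<close>: the edges of
  \<^const>\<open>power_edges\<close> also join tuples outside \<^const>\<open>power_verts\<close>.\<close>
definition connected_within :: "'a set \<Rightarrow> ('a \<Rightarrow> 'a \<Rightarrow> bool) \<Rightarrow> bool" where
  "connected_within V E \<longleftrightarrow> (\<forall>u\<in>V. \<forall>v\<in>V. (\<lambda>x y. x \<in> V \<and> y \<in> V \<and> E x y)\<^sup>*\<^sup>* u v)"

lemma connected_within_induct:
  assumes "connected_within V E" "a0 \<in> V" "P a0"
    and "\<And>a a'. a \<in> V \<Longrightarrow> a' \<in> V \<Longrightarrow> E a a' \<Longrightarrow> P a \<Longrightarrow> P a'"
  shows "\<forall>a\<in>V. P a"
proof
  fix a assume "a \<in> V"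
  then have "(\<lambda>x y. x \<in> V \<and> y \<in> V \<and> E x y)\<^sup>*\<^sup>* a0 a"
    using assms(1,2) unfolding connected_within_def by blast
  then show "P a"
    by (induction rule: rtranclp_induct) (use assms(3,4) in blast)+
qed

locale cliqued_product_coloring =
  fixes VA :: "'a set" and EA :: "'a \<Rightarrow> 'a \<Rightarrow> bool"
    and VB :: "'b set" and EB :: "'b \<Rightarrow> 'b \<Rightarrow> bool"
    and k :: nat and c :: "'a \<Rightarrow> 'b \<Rightarrow> nat"
  assumes two_le_k: "2 \<le> k"
    and color_less: "a \<in> VA \<Longrightarrow> b \<in> VB \<Longrightarrow> c a b < k"
    and color_proper: "a \<in> VA \<Longrightarrow> a' \<in> VA \<Longrightarrow> b \<in> VB \<Longrightarrow> b' \<in> VB \<Longrightarrow>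
      EA a a' \<Longrightarrow> EB b b' \<Longrightarrow> c a b \<noteq> c a' b'"
    and cliqued_A: "a \<in> VA \<Longrightarrow> \<exists>p. clique_map VA EA k p \<and> p 0 = a"
    and cliqued_B: "b \<in> VB \<Longrightarrow> \<exists>q. clique_map VB EB k q \<and> q 0 = b"
    and connected_A: "connected_within VA EA"
    and connected_B: "connected_within VB EB"
begin

lemma swap: "cliqued_product_coloring VB EB VA EA k (\<lambda>b a. c a b)"
proof
  show "c a b \<noteq> c a' b'"
    if "b \<in> VB" "b' \<in> VB" "a \<in> VA" "a' \<in> VA" "EB b b'" "EA a a'" for a a' b b'
    using color_proper that by blast
qed (use two_le_k color_less cliqued_A cliqued_B connected_A connected_B in blast)+

lemma clique_square_coloring:
  assumes "clique_map VA EA k p" "clique_map VB EB k q"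
  shows "\<And>s t. s < k \<Longrightarrow> t < k \<Longrightarrow> c (p s) (q t) < k"
    and "\<And>s s' t t'. s < k \<Longrightarrow> s' < k \<Longrightarrow> t < k \<Longrightarrow> t' < k \<Longrightarrow>
      s \<noteq> s' \<Longrightarrow> t \<noteq> t' \<Longrightarrow> c (p s) (q t) \<noteq> c (p s') (q t')"
  using assms color_less color_proper unfolding clique_map_def by auto

lemma clique_square_not_constant:
  assumes "clique_map VA EA k p" "clique_map VB EB k q"
  shows "\<exists>s<k. \<exists>t<k. c (p s) (q t) \<noteq> c (p 0) (q 0)"
proof -
  have "1 < k"
    using two_le_k by simp
  then show ?thesis
    using clique_square_coloring(2)[OF assms, of 1 0 1 0] by auto
qed

lemma row_constant_or_inj:
  assumes a: "a \<in> VA" and q: "clique_map VB EB k q"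
  shows "(\<forall>t<k. c a (q t) = c a (q 0)) \<or> inj_on (\<lambda>t. c a (q t)) {..<k}"
proof -
  obtain p where p: "clique_map VA EA k p" "p 0 = a"
    using cliqued_A[OF a] by blast
  from square_coloring_rows_or_columns_constant[OF clique_square_coloring[OF p(1) q]]
  show ?thesis
  proof
    assume "\<forall>s<k. \<forall>t<k. c (p s) (q t) = c (p s) (q 0)"
    then show ?thesis
      using p(2) two_le_k by auto
  next
    assume columns: "\<forall>s<k. \<forall>t<k. c (p s) (q t) = c (p 0) (q t)"
    have "inj_on (\<lambda>t. c a (q t)) {..<k}"
    proof (rule inj_onI)
      fix t t' assume "t \<in> {..<k}" "t' \<in> {..<k}" "c a (q t) = c a (q t')"
      then show "t = t'"
        using clique_square_coloring(2)[OF p(1) q, of 0 1 t t'] columns p(2) two_le_k by auto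
    qed
    then show ?thesis ..
  qed
qed

lemma row_eq_if_adjacent_inj:
  assumes "a \<in> VA" "a' \<in> VA" "EA a a'" and q: "clique_map VB EB k q"
    and "inj_on (\<lambda>t. c a (q t)) {..<k}" "t < k"
  shows "c a' (q t) = c a (q t)"
proof (rule inj_on_lessThan_off_diagonal_eq[of "\<lambda>t. c a (q t)"])
  have "q s \<in> VB" if "s < k" for s
    using q that unfolding clique_map_def by blast
  then show "c a (q s) < k" "c a' (q s) < k" if "s < k" for s
    using color_less assms(1,2) that by auto
  show "c a (q s) \<noteq> c a' (q s')" if "s < k" "s' < k" "s \<noteq> s'" for s s'
    using q \<open>\<And>s. s < k \<Longrightarrow> q s \<in> VB\<close> color_proper assms(1-3) that
    unfolding clique_map_def by blast
qed fact+

lemma rows_equal_or_constant: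
  assumes q: "clique_map VB EB k q"
  shows "(\<forall>a\<in>VA. \<forall>a'\<in>VA. \<forall>t<k. c a (q t) = c a' (q t)) \<or> (\<forall>a\<in>VA. \<forall>t<k. c a (q t) = c a (q 0))"
proof (cases "\<exists>a0\<in>VA. inj_on (\<lambda>t. c a0 (q t)) {..<k}")
  case True
  then obtain a0 where a0: "a0 \<in> VA" "inj_on (\<lambda>t. c a0 (q t)) {..<k}"
    by blast
  have "\<forall>a\<in>VA. \<forall>t<k. c a (q t) = c a0 (q t)"
  proof (rule connected_within_induct[OF connected_A a0(1)])
    fix a a' assume a: "a \<in> VA" "a' \<in> VA" "EA a a'" and eq: "\<forall>t<k. c a (q t) = c a0 (q t)"
    have "inj_on (\<lambda>t. c a (q t)) {..<k}"
      using a0(2) eq by (subst inj_on_cong[where g = "\<lambda>t. c a0 (q t)"]) auto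
    then show "\<forall>t<k. c a' (q t) = c a0 (q t)"
      using row_eq_if_adjacent_inj[OF a q] eq by simp
  qed simp
  then show ?thesis
    by simp
next
  case False
  then show ?thesis
    using row_constant_or_inj[OF _ q] by blast
qed

text \<open>If every clique of \<open>A\<close> sees \<open>c\<close> independent of \<open>b\<close>, we are done; otherwise some clique
  \<open>p\<close> of \<open>A\<close> has constant columns, and then no clique \<open>q\<close> of \<open>B\<close> can have constant rows, since
  \<open>c\<close> would be constant on \<open>p \<times> q\<close>.\<close>
theorem depends_on_one_argument:
  "(\<forall>a\<in>VA. \<forall>b\<in>VB. \<forall>b'\<in>VB. c a b = c a b') \<or> (\<forall>b\<in>VB. \<forall>a\<in>VA. \<forall>a'\<in>VA. c a b = c a' b)"
proof (cases "\<forall>p. clique_map VA EA k p \<longrightarrow> (\<forall>b\<in>VB. \<forall>b'\<in>VB. \<forall>s<k. c (p s) b = c (p s) b')")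
  case True
  have "c a b = c a b'" if a: "a \<in> VA" and "b \<in> VB" "b' \<in> VB" for a b b'
  proof -
    obtain p where "clique_map VA EA k p" "p 0 = a"
      using cliqued_A[OF a] by blast
    moreover have "0 < k"
      using two_le_k by simp
    ultimately show ?thesis
      using True that by blast
  qed
  then show ?thesis
    by blast
next
  case False
  interpret swapped: cliqued_product_coloring VB EB VA EA k "\<lambda>b a. c a b"
    by (rule swap)
  obtain p where p: "clique_map VA EA k p"
    and "\<not> (\<forall>b\<in>VB. \<forall>b'\<in>VB. \<forall>s<k. c (p s) b = c (p s) b')"
    using False by blast
  then have columns: "\<forall>b\<in>VB. \<forall>s<k. c (p s) b = c (p 0) b"
    using swapped.rows_equal_or_constant[OF p] by blast
  have "c a b = c a' b" if b: "b \<in> VB" and "a \<in> VA" "a' \<in> VA" for a a' b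
  proof -
    obtain q where q: "clique_map VB EB k q" "q 0 = b"
      using cliqued_B[OF b] by blast
    have "\<not> (\<forall>a\<in>VA. \<forall>t<k. c a (q t) = c a (q 0))"
    proof
      assume rows: "\<forall>a\<in>VA. \<forall>t<k. c a (q t) = c a (q 0)"
      have "c (p s) (q t) = c (p 0) (q 0)" if "s < k" "t < k" for s t
      proof -
        have "p s \<in> VA" "q 0 \<in> VB"
          using p q(1) that unfolding clique_map_def by auto
        then show ?thesis
          using rows columns that by metis
      qed
      then show False
        using clique_square_not_constant[OF p q(1)] by blast
    qed
    then have "\<forall>a\<in>VA. \<forall>a'\<in>VA. \<forall>t<k. c a (q t) = c a' (q t)"
      using rows_equal_or_constant[OF q(1)] by blast
    then show ?thesis
      using q(2) that two_le_k by fastforce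
  qed
  then show ?thesis
    by blast
qed

lemma slice_k_coloring:
  assumes indep: "\<forall>a\<in>VA. \<forall>b\<in>VB. \<forall>b'\<in>VB. c a b = c a b'" and b0: "b0 \<in> VB"
  shows "k_coloring VA EA k (\<lambda>a. c a b0)"
proof -
  obtain q where q: "clique_map VB EB k q" "q 0 = b0"
    using cliqued_B[OF b0] by blast
  then have b1: "q 1 \<in> VB" "EB b0 (q 1)"
    using two_le_k unfolding clique_map_def by force+
  have "c a b0 \<noteq> c a' b0" if "a \<in> VA" "a' \<in> VA" "EA a a'" for a a'
    using color_proper[OF that(1,2) b0 b1(1) that(3) b1(2)] indep that(2) b0 b1(1) by metis
  then show ?thesis
    using color_less b0 unfolding k_coloring_def proper_coloring_def by blast
qed

end

section \<open>Powers of a weakly-cliqued graph\<close>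

lemma clique_map_transpose:
  assumes "clique_map V E k p" "s < k"
  shows "clique_map V E k (p \<circ> transpose 0 s)"
  using assms unfolding clique_map_def transpose_def by auto

lemma weakly_cliqued_clique_map:
  assumes "weakly_cliqued V E" "v \<in> V"
  shows "\<exists>p. clique_map V E (chromatic_number V E) p \<and> p 0 = v"
proof -
  let ?k = "chromatic_number V E"
  obtain K where K: "is_clique V E K" "v \<in> K" "finite K" "card K = ?k"
    using assms unfolding weakly_cliqued_def by blast
  then obtain e where e: "bij_betw e {..<?k} K"
    using ex_bij_betw_nat_finite[OF K(3)] by (auto simp: lessThan_atLeast0)
  then obtain s0 where s0: "s0 < ?k" "e s0 = v"
    using K(2) unfolding bij_betw_def by auto
  have "clique_map V E ?k e"
    unfolding clique_map_def
  proof (intro conjI allI impI)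
    fix s assume "s < ?k"
    then show "e s \<in> V"
      using e K(1) unfolding bij_betw_def is_clique_def by auto
  next
    fix s t assume st: "s < ?k" "t < ?k" "s \<noteq> t"
    then have "e s \<noteq> e t" "e s \<in> K" "e t \<in> K"
      using e inj_on_eq_iff[OF bij_betw_imp_inj_on[OF e]] bij_betw_apply by fastforce+
    then show "E (e s) (e t)"
      using K(1) unfolding is_clique_def by blast
  qed
  then show ?thesis
    using clique_map_transpose s0 by fastforce
qed

lemma clique_map_power:
  assumes cliqued: "\<And>v. v \<in> V \<Longrightarrow> \<exists>p. clique_map V E k p \<and> p 0 = v"
    and x: "x \<in> power_verts V n"
  shows "\<exists>q. clique_map (power_verts V n) (power_edges E n) k q \<and> q 0 = x"
proof -
  have "\<forall>j\<in>{0..<n}. \<exists>p. clique_map V E k p \<and> p 0 = x j"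
    using cliqued x unfolding power_verts_def by auto
  from bchoice[OF this] obtain P where P: "\<forall>j\<in>{0..<n}. clique_map V E k (P j) \<and> P j 0 = x j"
    by blast
  define q where "q t = restrict (\<lambda>j. P j t) {0..<n}" for t
  have "clique_map (power_verts V n) (power_edges E n) k q"
    using P unfolding clique_map_def power_verts_def power_edges_def q_def by auto
  moreover have "q 0 = x"
  proof -
    have "q 0 = restrict x {0..<n}"
      using P unfolding q_def by (intro restrict_cong) auto
    then show ?thesis
      using x unfolding power_verts_def by (simp add: PiE_restrict)
  qed
  ultimately show ?thesis
    by blast
qed

lemma relpowp_closed_walks_ge_2:
  assumes "(R ^^ 2) v v" "(R ^^ 3) v v" "2 \<le> j"
  shows "(R ^^ j) v v"
  using assms(3)
proof (induction j rule: less_induct)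
  case (less j)
  show ?case
  proof (cases "j \<le> 3")
    case True
    then have "j = 2 \<or> j = 3"
      using less.prems by auto
    then show ?thesis
      using assms(1,2) by auto
  next
    case False
    then have "(R ^^ (j - 2)) v v"
      using less.IH[of "j - 2"] by simp
    then have "(R ^^ ((j - 2) + 2)) v v"
      unfolding relpowp_add using assms(1) by (rule relcomppI)
    moreover have "(j - 2) + 2 = j"
      using False by simp
    ultimately show ?thesis
      by metis
  qed
qed

lemma clique_map_closed_walks:
  assumes "clique_map V E k p" "3 \<le> k" "2 \<le> j"
  shows "(E ^^ j) (p 0) (p 0)"
proof (rule relpowp_closed_walks_ge_2[OF _ _ assms(3)])
  have E: "E (p 0) (p 1)" "E (p 1) (p 0)" "E (p 1) (p 2)" "E (p 2) (p 0)"
    using assms(1,2) unfolding clique_map_def by auto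
  show "(E ^^ 2) (p 0) (p 0)"
    unfolding numeral_2_eq_2 by (rule relpowp_Suc_I[OF relpowp_Suc_I[OF relpowp_0_I[of E] E(1)] E(2)])
  show "(E ^^ 3) (p 0) (p 0)"
    unfolding numeral_3_eq_3
    by (rule relpowp_Suc_I[OF relpowp_Suc_I[OF relpowp_Suc_I[OF relpowp_0_I[of E] E(1)] E(3)] E(4)])
qed

lemma common_walk_length:
  assumes "finite J" "\<And>j. j \<in> J \<Longrightarrow> R\<^sup>*\<^sup>* (u j) (v j)"
    and "\<And>j i. j \<in> J \<Longrightarrow> 2 \<le> i \<Longrightarrow> (R ^^ i) (v j) (v j)"
  shows "\<exists>M. \<forall>j\<in>J. (R ^^ M) (u j) (v j)"
proof -
  have "\<forall>j\<in>J. \<exists>n. (R ^^ n) (u j) (v j)"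
    by (intro ballI rtranclp_imp_relpowp assms(2))
  from bchoice[OF this] obtain N where N: "\<forall>j\<in>J. (R ^^ N j) (u j) (v j)"
    by blast
  define M where "M = (\<Sum>j\<in>J. N j) + 2"
  have "(R ^^ M) (u j) (v j)" if j: "j \<in> J" for j
  proof -
    have "N j \<le> (\<Sum>j\<in>J. N j)"
      using assms(1) j by (intro member_le_sum) simp_all
    then obtain d where d: "M = N j + d" "2 \<le> d"
      unfolding M_def by (metis add.assoc le_Suc_ex le_add2)
    show ?thesis
      unfolding d(1) relpowp_add using N j assms(3)[OF j d(2)] by (intro relcomppI) auto
  qed
  then show ?thesis
    by blast
qed

lemma connected_within_graph:
  assumes "graph V E" "connected_graph V E"
  shows "connected_within V E"
proof -
  have "(\<lambda>x y. x \<in> V \<and> y \<in> V \<and> E x y) = E"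
    using assms(1) unfolding graph_def by blast
  then show ?thesis
    using assms(2) unfolding connected_within_def connected_graph_def by simp
qed

text \<open>Coordinatewise walks are padded to a common length by closed walks, which exist in all
  lengths \<open>\<ge> 2\<close>; this is where non-bipartiteness enters.\<close>
lemma connected_within_power:
  assumes graph: "graph V E" and "connected_graph V E"
    and closed: "\<And>v j. v \<in> V \<Longrightarrow> 2 \<le> j \<Longrightarrow> (E ^^ j) v v"
  shows "connected_within (power_verts V n) (power_edges E n)"
  unfolding connected_within_def
proof (intro ballI)
  fix x y assume x: "x \<in> power_verts V n" and y: "y \<in> power_verts V n"
  then have xy: "x j \<in> V" "y j \<in> V" if "j \<in> {0..<n}" for j
    using that unfolding power_verts_def by auto
  obtain M where "\<forall>j\<in>{0..<n}. (E ^^ M) (x j) (y j)"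
    using common_walk_length[of "{0..<n}" E x y] xy closed assms(2)
    unfolding connected_graph_def by blast
  then obtain W where W: "\<And>j. j \<in> {0..<n} \<Longrightarrow>
      W j 0 = x j \<and> W j M = y j \<and> (\<forall>i<M. E (W j i) (W j (Suc i)))"
    unfolding relpowp_fun_conv by metis
  define w where "w i = restrict (\<lambda>j. W j i) {0..<n}" for i
  have "w i \<in> power_verts V n" if "i \<le> M" for i
  proof -
    have "W j i \<in> V" if "j \<in> {0..<n}" for j
      using W[OF that] xy[OF that] graph \<open>i \<le> M\<close> unfolding graph_def
      by (metis le_neq_implies_less)
    then show ?thesis
      unfolding w_def power_verts_def by simp
  qed
  moreover have "w 0 = x" "w M = y"
    using W x y unfolding w_def power_verts_def by (simp_all add: PiE_restrict cong: restrict_cong)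
  moreover have "power_edges E n (w i) (w (Suc i))" if "i < M" for i
    using W that unfolding w_def power_edges_def by simp
  ultimately have "((\<lambda>a b. a \<in> power_verts V n \<and> b \<in> power_verts V n \<and> power_edges E n a b) ^^ M) x y"
    unfolding relpowp_fun_conv by (intro exI[of _ w]) auto
  then show "(\<lambda>a b. a \<in> power_verts V n \<and> b \<in> power_verts V n \<and> power_edges E n a b)\<^sup>*\<^sup>* x y"
    by (rule relpowp_imp_rtranclp)
qed

lemma fun_upd_in_power_verts: "x \<in> power_verts V n \<Longrightarrow> a \<in> V \<Longrightarrow> x(n := a) \<in> power_verts V (Suc n)"
  by (auto simp: power_verts_def PiE_iff extensional_def)

lemma fun_upd_power_edges:
  "power_edges E n x y \<Longrightarrow> E a b \<Longrightarrow> power_edges E (Suc n) (x(n := a)) (y(n := b))"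
  by (auto simp: power_edges_def less_Suc_eq)

lemma fun_upd_undefined_in_power_verts:
  "x \<in> power_verts V (Suc n) \<Longrightarrow> x(n := undefined) \<in> power_verts V n"
  by (auto simp: power_verts_def PiE_iff extensional_def)

lemma last_in_power_verts: "x \<in> power_verts V (Suc n) \<Longrightarrow> x n \<in> V"
  by (auto simp: power_verts_def)

text \<open>\<open>H\<^sup>0\<close> is a single vertex with a loop, so it has no proper coloring; this makes
  the vacuous case \<open>n = 0\<close> the base of the induction.\<close>
lemma power_zero_no_k_coloring: "\<not> k_coloring (power_verts V 0) (power_edges E 0) k \<Phi>"
  unfolding k_coloring_def proper_coloring_def power_verts_def power_edges_def by simp

lemma power_split_cliqued_product_coloring:
  assumes graph: "graph V E" and connected: "connected_graph V E" and "3 \<le> k"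
    and cliqued: "\<And>v. v \<in> V \<Longrightarrow> \<exists>p. clique_map V E k p \<and> p 0 = v"
    and \<Phi>: "k_coloring (power_verts V (Suc m)) (power_edges E (Suc m)) k \<Phi>"
  shows "cliqued_product_coloring (power_verts V m) (power_edges E m) V E k (\<lambda>a b. \<Phi> (a(m := b)))"
proof
  show "2 \<le> k"
    using \<open>3 \<le> k\<close> by simp
  show "\<Phi> (a(m := b)) < k" if "a \<in> power_verts V m" "b \<in> V" for a b
    using \<Phi> fun_upd_in_power_verts[OF that] unfolding k_coloring_def by blast
  show "\<Phi> (a(m := b)) \<noteq> \<Phi> (a'(m := b'))"
    if "a \<in> power_verts V m" "a' \<in> power_verts V m" "b \<in> V" "b' \<in> V"
      "power_edges E m a a'" "E b b'" for a a' b b'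
    using \<Phi> fun_upd_in_power_verts[OF that(1,3)] fun_upd_in_power_verts[OF that(2,4)]
      fun_upd_power_edges[OF that(5,6)]
    unfolding k_coloring_def proper_coloring_def by blast
  show "\<exists>p. clique_map (power_verts V m) (power_edges E m) k p \<and> p 0 = a"
    if "a \<in> power_verts V m" for a
    using clique_map_power[OF cliqued that] .
  show "\<exists>q. clique_map V E k q \<and> q 0 = b" if "b \<in> V" for b
    using cliqued[OF that] .
  have "(E ^^ j) v v" if "v \<in> V" "2 \<le> j" for v j
    using cliqued[OF that(1)] clique_map_closed_walks[OF _ \<open>3 \<le> k\<close> that(2)] by blast
  then show "connected_within (power_verts V m) (power_edges E m)"
    by (rule connected_within_power[OF graph connected])
  show "connected_within V E"
    using connected_within_graph[OF graph connected] .
qed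

lemma power_k_coloring_trivial:
  assumes "graph V E" and connected: "connected_graph V E" and "3 \<le> k"
    and "\<And>v. v \<in> V \<Longrightarrow> \<exists>p. clique_map V E k p \<and> p 0 = v"
  shows "k_coloring (power_verts V n) (power_edges E n) k \<Phi> \<Longrightarrow> trivial_power_coloring V E n \<Phi>"
proof (induction n arbitrary: \<Phi>)
  case 0
  then show ?case
    using power_zero_no_k_coloring by blast
next
  case (Suc m)
  interpret cliqued_product_coloring "power_verts V m" "power_edges E m" V E k "\<lambda>a b. \<Phi> (a(m := b))"
    using power_split_cliqued_product_coloring[OF assms Suc.prems] .
  have split: "\<Phi> x = \<Phi> ((x(m := undefined))(m := x m))" for x
    by simp
  obtain v0 where v0: "v0 \<in> V"
    using connected unfolding connected_graph_def by blast
  from depends_on_one_argument show ?case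
  proof
    assume indep: "\<forall>a\<in>power_verts V m. \<forall>b\<in>V. \<forall>b'\<in>V. \<Phi> (a(m := b)) = \<Phi> (a(m := b'))"
    obtain i \<phi> where i: "i < m" "proper_coloring V E \<phi>"
      and \<phi>: "\<forall>a\<in>power_verts V m. \<Phi> (a(m := v0)) = \<phi> (a i)"
      using Suc.IH[OF slice_k_coloring[OF indep v0]] unfolding trivial_power_coloring_def by blast
    have "\<Phi> x = \<phi> (x i)" if x: "x \<in> power_verts V (Suc m)" for x
    proof -
      have x': "x(m := undefined) \<in> power_verts V m"
        using fun_upd_undefined_in_power_verts[OF x] .
      then have "\<Phi> x = \<Phi> ((x(m := undefined))(m := v0))"
        using indep last_in_power_verts[OF x] v0 split by metis
      also have "\<dots> = \<phi> (x i)"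
        using \<phi>[rule_format, OF x'] i(1) by simp
      finally show ?thesis .
    qed
    then show ?case
      using i unfolding trivial_power_coloring_def by (meson less_SucI)
  next
    assume indep: "\<forall>b\<in>V. \<forall>a\<in>power_verts V m. \<forall>a'\<in>power_verts V m. \<Phi> (a(m := b)) = \<Phi> (a'(m := b))"
    interpret swapped: cliqued_product_coloring V E "power_verts V m" "power_edges E m" k
      "\<lambda>b a. \<Phi> (a(m := b))"
      by (rule swap)
    define a0 where "a0 = restrict (\<lambda>_. v0) {0..<m}"
    have a0: "a0 \<in> power_verts V m"
      using v0 unfolding a0_def power_verts_def by simp
    have "k_coloring V E k (\<lambda>b. \<Phi> (a0(m := b)))"
      using swapped.slice_k_coloring[OF indep a0] .
    moreover have "\<Phi> x = \<Phi> (a0(m := x m))" if x: "x \<in> power_verts V (Suc m)" for x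
      using indep a0 fun_upd_undefined_in_power_verts[OF x] last_in_power_verts[OF x] split by metis
    ultimately show ?case
      unfolding trivial_power_coloring_def k_coloring_def by blast
  qed
qed

theorem mainTheorem11:
  fixes V :: "'a set" and E :: "'a \<Rightarrow> 'a \<Rightarrow> bool"
  assumes "graph V E" and "finite V" and "connected_graph V E"
    and "weakly_cliqued V E" and "chromatic_number V E \<ge> 3"
  shows "trivially_power_colorable V E"
  unfolding trivially_power_colorable_def
  using power_k_coloring_trivial[OF assms(1,3,5) weakly_cliqued_clique_map[OF assms(4)]] by blast

end
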